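(* Let $X$ be a countably infinite set. The lattice $\mathrm{Cl}_{loc}(X)$ of local clones on $X$ is not embeddable (as a sublattice, i.e. via an injective map preserving binary meets and joins) into any algebraic lattice with countably many compact elements.
   Context: A clone on $X$ is a set of finitary operations $X^n\to X$ ($n\ge1$) containing all projections $\pi^n_k(x_1,\dots,x_n)=x_k$ and closed under composition. Giving $X$ the discrete topology and $X^{X^n}$ the product topology, a clone is local if for each $n$ its set of $n$-ary operations is closed in $X^{X^n}$; equivalently, an $n$-ary operation $g$ belongs to the clone whenever for every finite $B\subseteq X^n$ some $n$-ary operation of the clone agrees with $g$ on $B$. $\mathrm{Cl}_{loc}(X)$ is the complete lattice of local clones on $X$ ordered by inclusion. An element $a$ of a complete lattice is compact if whenever $a\le\bigvee A$ there is a finite $A'\subseteq A$ with $a\le\bigvee A'$; a complete lattice is algebraic if every element is a join of compact elements. *)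

theory Defs
  imports Main "HOL-Library.Countable_Set"
begin

text \<open>An n-ary operation on the type 'a is represented as a function on lists
that is determined by its values on lists of length n and is undefined elsewhere.\<close>

definition ops :: "nat \<Rightarrow> ('a list \<Rightarrow> 'a) set" where
  "ops n = {f. \<forall>xs. length xs \<noteq> n \<longrightarrow> f xs = undefined}"

definition proj :: "nat \<Rightarrow> nat \<Rightarrow> 'a list \<Rightarrow> 'a" where
  "proj n k = (\<lambda>xs. if length xs = n then xs ! k else undefined)"

definition comp_op :: "nat \<Rightarrow> ('a list \<Rightarrow> 'a) \<Rightarrow> ('a list \<Rightarrow> 'a) list \<Rightarrow> 'a list \<Rightarrow> 'a" where
  "comp_op n f gs = (\<lambda>xs. if length xs = n then f (map (\<lambda>g. g xs) gs) else undefined)"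

type_synonym 'a clone = "nat \<Rightarrow> ('a list \<Rightarrow> 'a) set"

definition is_clone :: "'a clone \<Rightarrow> bool" where
  "is_clone C \<longleftrightarrow>
     C 0 = {} \<and>
     (\<forall>n. C n \<subseteq> ops n) \<and>
     (\<forall>n k. 1 \<le> n \<and> k < n \<longrightarrow> proj n k \<in> C n) \<and>
     (\<forall>m n f gs. 1 \<le> n \<and> f \<in> C m \<and> length gs = m \<and> set gs \<subseteq> C n
         \<longrightarrow> comp_op n f gs \<in> C n)"

definition is_local_clone :: "'a clone \<Rightarrow> bool" where
  "is_local_clone C \<longleftrightarrow> is_clone C \<and>
     (\<forall>n \<ge> 1. \<forall>g \<in> ops n.
        (\<forall>B. finite B \<and> B \<subseteq> {xs. length xs = n} \<longrightarrow> (\<exists>f \<in> C n. \<forall>xs \<in> B. f xs = g xs))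
        \<longrightarrow> g \<in> C n)"

definition local_clones :: "'a clone set" where
  "local_clones = {C. is_local_clone C}"

definition loc_meet :: "'a clone \<Rightarrow> 'a clone \<Rightarrow> 'a clone" where
  "loc_meet C D = (\<lambda>n. C n \<inter> D n)"

definition loc_join :: "'a clone \<Rightarrow> 'a clone \<Rightarrow> 'a clone" where
  "loc_join C D = (\<lambda>n. \<Inter>{E n | E. is_local_clone E \<and> (\<forall>k. C k \<subseteq> E k) \<and> (\<forall>k. D k \<subseteq> E k)})"

definition compact_el :: "'b::complete_lattice \<Rightarrow> bool" where
  "compact_el a \<longleftrightarrow> (\<forall>A. a \<le> Sup A \<longrightarrow> (\<exists>A'. finite A' \<and> A' \<subseteq> A \<and> a \<le> Sup A'))"

definition algebraic_lattice :: "'b::complete_lattice itself \<Rightarrow> bool" where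
  "algebraic_lattice _ \<longleftrightarrow> (\<forall>a::'b. a = Sup {c. compact_el c \<and> c \<le> a})"

definition lattice_embedding :: "('a clone \<Rightarrow> 'b::complete_lattice) \<Rightarrow> bool" where
  "lattice_embedding h \<longleftrightarrow> inj_on h local_clones \<and>
     (\<forall>C \<in> local_clones. \<forall>D \<in> local_clones.
        h (loc_meet C D) = inf (h C) (h D) \<and> h (loc_join C D) = sup (h C) (h D))"

end

theory Submission
  imports Defs
begin

text \<open>Choose two distinct points and, for each set \<open>T\<close> avoiding them, the retraction of
\<open>X\<close> onto \<open>T \<union> {a}\<close> sending everything outside \<open>T\<close> to \<open>a\<close>. This gives \<open>2\<^sup>\<aleph>\<^sub>0\<close> distinct
non-identity idempotents \<open>F\<close>. The clone \<open>K\<^sub>F\<close> of all operations \<open>s(x\<^sub>k)\<close> with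
\<open>s \<in> {id, F}\<close> is finite in each arity, hence local, and two such clones intersect in the
clone \<open>J\<close> of projections. An embedding \<open>h\<close> into an algebraic lattice would therefore give
compact elements \<open>c\<^sub>F \<le> h K\<^sub>F\<close> with \<open>c\<^sub>F \<not>\<le> h J\<close>, and these are pairwise distinct because
\<open>h K\<^sub>F \<sqinter> h K\<^sub>G = h J\<close>. So there are uncountably many compact elements.\<close>

definition unary_op :: "nat \<Rightarrow> ('a \<Rightarrow> 'a) \<Rightarrow> nat \<Rightarrow> 'a list \<Rightarrow> 'a" where
  "unary_op n s k = (\<lambda>xs. if length xs = n then s (xs ! k) else undefined)"

definition unary_clone :: "('a \<Rightarrow> 'a) set \<Rightarrow> 'a clone" where
  "unary_clone S n = {unary_op n s k | s k. s \<in> S \<and> k < n}"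

lemma finite_unary_clone: "finite S \<Longrightarrow> finite (unary_clone S n)"
proof -
  assume "finite S"
  have "unary_clone S n = (\<lambda>(s, k). unary_op n s k) ` (S \<times> {..<n})"
    unfolding unary_clone_def by auto
  then show ?thesis using \<open>finite S\<close> by simp
qed

lemma is_clone_unary_clone:
  assumes "id \<in> S" and "\<And>s t. s \<in> S \<Longrightarrow> t \<in> S \<Longrightarrow> s \<circ> t \<in> S"
  shows "is_clone (unary_clone S)"
  unfolding is_clone_def
proof (intro conjI allI impI)
  show "unary_clone S 0 = {}" "\<And>n. unary_clone S n \<subseteq> ops n"
    unfolding unary_clone_def ops_def unary_op_def by auto
next
  fix n k :: nat assume "1 \<le> n \<and> k < n"
  moreover have "proj n k = unary_op n id k" by (auto simp: proj_def unary_op_def)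
  ultimately show "proj n k \<in> unary_clone S n"
    using \<open>id \<in> S\<close> unfolding unary_clone_def by blast
next
  fix m n f and gs :: "('a list \<Rightarrow> 'a) list"
  assume a: "1 \<le> n \<and> f \<in> unary_clone S m \<and> length gs = m \<and> set gs \<subseteq> unary_clone S n"
  then obtain s k where s: "s \<in> S" "k < m" "f = unary_op m s k"
    unfolding unary_clone_def by blast
  with a have "gs ! k \<in> unary_clone S n" by auto
  then obtain t j where t: "t \<in> S" "j < n" "gs ! k = unary_op n t j"
    unfolding unary_clone_def by blast
  have "comp_op n f gs = unary_op n (s \<circ> t) j"
    using a s t by (auto simp: comp_op_def unary_op_def)
  then show "comp_op n f gs \<in> unary_clone S n"
    using assms(2)[OF s(1) t(1)] t(2) unfolding unary_clone_def by blast
qed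

lemma finite_ops_separated_on_finite_set:
  assumes "finite F" "F \<subseteq> ops n" "g \<in> ops n" "g \<notin> F"
  obtains B where "finite B" "B \<subseteq> {xs. length xs = n}" "\<forall>f \<in> F. \<exists>xs \<in> B. f xs \<noteq> g xs"
proof -
  have "\<exists>xs. length xs = n \<and> f xs \<noteq> g xs" if "f \<in> F" for f
  proof (rule ccontr)
    assume agree: "\<not> ?thesis"
    have "f xs = g xs" for xs
    proof (cases "length xs = n")
      case True
      with agree show ?thesis by simp
    next
      case False
      with that assms(2,3) show ?thesis unfolding ops_def by (auto simp: subset_iff)
    qed
    then show False using that \<open>g \<notin> F\<close> by (metis ext)
  qed
  then obtain w where w: "\<And>f. f \<in> F \<Longrightarrow> length (w f) = n \<and> f (w f) \<noteq> g (w f)"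
    by metis
  show thesis
  proof (rule that[of "w ` F"])
    show "finite (w ` F)" using \<open>finite F\<close> by simp
    show "w ` F \<subseteq> {xs. length xs = n}" "\<forall>f \<in> F. \<exists>xs \<in> w ` F. f xs \<noteq> g xs"
      using w by auto
  qed
qed

lemma is_local_clone_if_finite:
  assumes "is_clone C" and "\<And>n. finite (C n)"
  shows "is_local_clone C"
  unfolding is_local_clone_def
proof (intro conjI assms(1) allI impI ballI)
  fix n :: nat and g
  assume g: "g \<in> ops n"
    and agree: "\<forall>B. finite B \<and> B \<subseteq> {xs. length xs = n} \<longrightarrow> (\<exists>f \<in> C n. \<forall>xs \<in> B. f xs = g xs)"
  show "g \<in> C n"
  proof (rule ccontr)
    assume "g \<notin> C n"
    moreover have "C n \<subseteq> ops n" using assms(1) by (simp add: is_clone_def)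
    ultimately obtain B where "finite B" "B \<subseteq> {xs. length xs = n}"
        "\<forall>f \<in> C n. \<exists>xs \<in> B. f xs \<noteq> g xs"
      using finite_ops_separated_on_finite_set[OF assms(2) _ g] by metis
    then show False using agree by metis
  qed
qed

lemma unary_clone_idempotent_local:
  assumes "F \<circ> F = F"
  shows "unary_clone {id, F} \<in> local_clones"
  unfolding local_clones_def
  using assms by (auto intro!: is_local_clone_if_finite is_clone_unary_clone finite_unary_clone)

lemma unary_clone_id_local: "unary_clone {id} \<in> local_clones"
  using unary_clone_idempotent_local[of id] by simp

lemma unary_op_eqD:
  assumes "unary_op n s k = unary_op n t j" "k < n" "j < n"
  shows "(k = j \<and> s = t) \<or> (k \<noteq> j \<and> (\<forall>x y. s x = t y))"
proof (cases "k = j")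
  case True
  have "s x = t x" for x
    using fun_cong[OF assms(1), of "replicate n x"] True assms by (simp add: unary_op_def)
  then show ?thesis using True by auto
next
  case False
  have "s x = t y" for x y
    using fun_cong[OF assms(1), of "(replicate n x)[j := y]"] False assms by (simp add: unary_op_def)
  then show ?thesis using False by auto
qed

lemma loc_meet_unary_clone_pair:
  fixes F G :: "'a \<Rightarrow> 'a"
  assumes nontrivial: "\<exists>x y :: 'a. x \<noteq> y" and "F \<noteq> G"
  shows "loc_meet (unary_clone {id, F}) (unary_clone {id, G}) = unary_clone {id}"
proof
  fix n
  have not_const: "\<not> (\<forall>x y. H x = y)" "\<not> (\<forall>x y. x = H y)" for H :: "'a \<Rightarrow> 'a"
    using nontrivial by metis+
  have "unary_clone {id, F} n \<inter> unary_clone {id, G} n \<subseteq> unary_clone {id} n"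
  proof
    fix f assume "f \<in> unary_clone {id, F} n \<inter> unary_clone {id, G} n"
    then obtain s k t j where st: "s \<in> {id, F}" "t \<in> {id, G}" "k < n" "j < n"
        "f = unary_op n s k" "f = unary_op n t j"
      unfolding unary_clone_def by blast
    then have "(k = j \<and> s = t) \<or> (k \<noteq> j \<and> (\<forall>x y. s x = t y))"
      using unary_op_eqD[of n s k t j] by simp
    then have "s = id \<or> t = id"
      using st(1,2) \<open>F \<noteq> G\<close> not_const by (auto simp: fun_eq_iff)
    then show "f \<in> unary_clone {id} n"
      using st unfolding unary_clone_def by blast
  qed
  then show "loc_meet (unary_clone {id, F}) (unary_clone {id, G}) n = unary_clone {id} n"
    unfolding loc_meet_def unary_clone_def by blast
qed

lemma unary_clone_insert_neq:
  assumes "F \<noteq> id"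
  shows "unary_clone {id, F} \<noteq> unary_clone {id}"
proof
  assume "unary_clone {id, F} = unary_clone {id}"
  moreover have "unary_op 1 F 0 \<in> unary_clone {id, F} 1"
    unfolding unary_clone_def by blast
  ultimately have "unary_op 1 F 0 \<in> unary_clone {id} 1" by simp
  then have "unary_op 1 F 0 = unary_op 1 id 0"
    unfolding unary_clone_def by auto
  then show False using unary_op_eqD[of 1 F 0 id 0] assms by simp
qed

lemma uncountable_Pow:
  assumes "infinite Y"
  shows "uncountable (Pow Y)"
proof
  assume "countable (Pow Y)"
  then have "countable ((\<lambda>y. {y}) ` Y)" by (rule countable_subset[rotated]) auto
  then have "countable Y" by (rule countable_image_inj_on) (simp add: inj_on_def)
  have "(from_nat_into (Pow Y) \<circ> to_nat_on Y) ` Y = from_nat_into (Pow Y) ` (to_nat_on Y ` Y)"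
    by (rule image_comp[symmetric])
  also have "\<dots> = Pow Y"
    using image_to_nat_on[OF \<open>countable Y\<close> assms] \<open>countable (Pow Y)\<close>
    by (simp add: Pow_not_empty)
  finally show False using Cantors_theorem by blast
qed

lemma uncountable_idempotents:
  assumes "infinite (UNIV :: 'a set)"
  shows "uncountable {F :: 'a \<Rightarrow> 'a. F \<circ> F = F \<and> F \<noteq> id}"
proof
  assume countable: "countable {F :: 'a \<Rightarrow> 'a. F \<circ> F = F \<and> F \<noteq> id}"
  obtain a b :: 'a where "a \<noteq> b"
    using ex_new_if_finite[OF assms, of "{undefined}"] by blast
  define Y where "Y = - {a, b}"
  define retract where "retract T x = (if x \<in> T then x else a)" for T and x :: 'a
  have inj: "inj_on retract (Pow Y)"
  proof (rule inj_onI)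
    fix T T' assume T: "T \<in> Pow Y" "T' \<in> Pow Y" and eq: "retract T = retract T'"
    have "x \<in> T \<longleftrightarrow> x \<in> T'" for x
      using fun_cong[OF eq, of x] T unfolding retract_def Y_def by (auto split: if_splits)
    then show "T = T'" by blast
  qed
  have "retract T \<circ> retract T = retract T \<and> retract T \<noteq> id" if "T \<in> Pow Y" for T
  proof
    show "retract T \<circ> retract T = retract T"
      using that unfolding retract_def Y_def by (auto simp: fun_eq_iff)
    have "retract T b = a" using that unfolding retract_def Y_def by auto
    then show "retract T \<noteq> id" using \<open>a \<noteq> b\<close> by auto
  qed
  then have "retract ` Pow Y \<subseteq> {F. F \<circ> F = F \<and> F \<noteq> id}" by (simp add: image_subset_iff)
  then have "countable (retract ` Pow Y)" using countable by (rule countable_subset)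
  then have "countable (Pow Y)" using inj by (rule countable_image_inj_on)
  moreover have "infinite Y" using assms unfolding Y_def by (simp add: Compl_eq_Diff_UNIV)
  ultimately show False using uncountable_Pow by blast
qed

lemma compact_el_separates:
  fixes x y :: "'b::complete_lattice"
  assumes "algebraic_lattice TYPE('b)" and "\<not> x \<le> y"
  obtains c where "compact_el c" "c \<le> x" "\<not> c \<le> y"
proof -
  have "\<exists>c. compact_el c \<and> c \<le> x \<and> \<not> c \<le> y"
  proof (rule ccontr)
    assume "\<not> ?thesis"
    then have "Sup {c. compact_el c \<and> c \<le> x} \<le> y" by (auto intro: Sup_least)
    moreover have "x = Sup {c. compact_el c \<and> c \<le> x}"
      using assms(1) unfolding algebraic_lattice_def by blast
    ultimately show False using assms(2) by simp
  qed
  then show thesis using that by blast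
qed

lemma countable_if_pairwise_inf_le:
  fixes a :: "'i \<Rightarrow> 'b::complete_lattice"
  assumes "algebraic_lattice TYPE('b)" and "countable {c :: 'b. compact_el c}"
    and above: "\<And>i. i \<in> I \<Longrightarrow> \<not> a i \<le> b"
    and pairwise: "\<And>i j. i \<in> I \<Longrightarrow> j \<in> I \<Longrightarrow> i \<noteq> j \<Longrightarrow> inf (a i) (a j) \<le> b"
  shows "countable I"
proof -
  have "\<exists>c. compact_el c \<and> c \<le> a i \<and> \<not> c \<le> b" if "i \<in> I" for i
    using compact_el_separates[OF assms(1) above[OF that]] by blast
  then obtain c where c: "\<forall>i \<in> I. compact_el (c i) \<and> c i \<le> a i \<and> \<not> c i \<le> b"
    by metis
  have "inj_on c I"
  proof (rule inj_onI, rule ccontr)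
    fix i j assume ij: "i \<in> I" "j \<in> I" "c i = c j" "i \<noteq> j"
    then have "c i \<le> inf (a i) (a j)" using c by (metis le_inf_iff)
    also have "\<dots> \<le> b" using pairwise ij by blast
    finally show False using c ij(1) by blast
  qed
  have "c ` I \<subseteq> {c. compact_el c}" using c by auto
  then have "countable (c ` I)" using assms(2) by (rule countable_subset)
  then show ?thesis using \<open>inj_on c I\<close> by (rule countable_image_inj_on)
qed

lemma lattice_embedding_not_le:
  assumes "lattice_embedding h" "C \<in> local_clones" "D \<in> local_clones"
    and "loc_meet C D = D" "C \<noteq> D"
  shows "\<not> h C \<le> h D"
proof
  assume "h C \<le> h D"
  have "h (loc_meet C D) = inf (h C) (h D)"
    using assms(1-3) by (simp add: lattice_embedding_def)
  then have "h D = inf (h C) (h D)" using assms(4) by simp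
  then have "h C = h D" using \<open>h C \<le> h D\<close> by (simp add: inf_absorb1)
  moreover have "inj_on h local_clones" using assms(1) by (simp add: lattice_embedding_def)
  ultimately show False using assms(2,3,5) by (simp add: inj_on_def)
qed

theorem corollary2p12:
  assumes "countable (UNIV :: 'a set)" and "infinite (UNIV :: 'a set)"
    and "algebraic_lattice TYPE('b::complete_lattice)"
    and "countable {c :: 'b. compact_el c}"
  shows "\<not> (\<exists>h :: 'a clone \<Rightarrow> 'b. lattice_embedding h)"
proof
  assume "\<exists>h :: 'a clone \<Rightarrow> 'b. lattice_embedding h"
  then obtain h :: "'a clone \<Rightarrow> 'b" where h: "lattice_embedding h" ..
  have nontrivial: "\<exists>x y :: 'a. x \<noteq> y"
    using ex_new_if_finite[OF assms(2), of "{undefined}"] by blast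
  let ?Idem = "{F :: 'a \<Rightarrow> 'a. F \<circ> F = F \<and> F \<noteq> id}"
  let ?K = "\<lambda>F. unary_clone {id, F}" and ?J = "unary_clone {id :: 'a \<Rightarrow> 'a}"
  have "countable ?Idem"
  proof (rule countable_if_pairwise_inf_le[OF assms(3,4), where a = "h \<circ> ?K" and b = "h ?J"])
    fix F assume "F \<in> ?Idem"
    then have "?K F \<in> local_clones" "?K F \<noteq> ?J"
      by (simp_all add: unary_clone_idempotent_local unary_clone_insert_neq)
    moreover have "loc_meet (?K F) ?J = ?J"
      using loc_meet_unary_clone_pair[OF nontrivial, of F id] \<open>F \<in> ?Idem\<close> by simp
    ultimately show "\<not> (h \<circ> ?K) F \<le> h ?J"
      using lattice_embedding_not_le[OF h _ unary_clone_id_local] by simp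
  next
    fix F G assume "F \<in> ?Idem" "G \<in> ?Idem" "F \<noteq> G"
    then have "inf (h (?K F)) (h (?K G)) = h (loc_meet (?K F) (?K G))"
      using h by (simp add: lattice_embedding_def unary_clone_idempotent_local)
    also have "\<dots> = h ?J" using loc_meet_unary_clone_pair[OF nontrivial \<open>F \<noteq> G\<close>] by simp
    finally show "inf ((h \<circ> ?K) F) ((h \<circ> ?K) G) \<le> h ?J" by simp
  qed
  then show False using uncountable_idempotents[OF assms(2)] by blast
qed

end
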